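(* Let $$y=\frac{32s(s+1)(5s^2+6s-3)}{(s^2+2s+5)(3s^2+2s+3)^2},\qquad t=\frac{1024s^3(s+1)^2}{(s^2+6s+1)(3s^2+2s+3)^3}.$$ Then $y(t)$ is a solution of $\mathrm{P}_{\mathrm{VI}}$ with parameters $(\theta_1,\theta_2,\theta_3,\theta_4)=(1/2,1/4,1/2,3/4)$.
   Context: $\mathrm{P}_{\mathrm{VI}}$ is the equation $$\frac{d^2y}{dt^2}=\frac12\Big(\frac1y+\frac1{y-1}+\frac1{y-t}\Big)\Big(\frac{dy}{dt}\Big)^2-\Big(\frac1t+\frac1{t-1}+\frac1{y-t}\Big)\frac{dy}{dt}+\frac{y(y-1)(y-t)}{t^2(t-1)^2}\Big(\alpha+\beta\frac{t}{y^2}+\gamma\frac{t-1}{(y-1)^2}+\delta\frac{t(t-1)}{(y-t)^2}\Big),$$ with $\alpha=(\theta_4-1)^2/2$, $\beta=-\theta_1^2/2$, $\gamma=\theta_3^2/2$, $\delta=(1-\theta_2^2)/2$. When $y,t$ are given as rational functions of a parameter on a curve, derivatives with respect to $t$ are computed via the chain rule. *)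

theory Defs
  imports "HOL-Analysis.Analysis"
begin

definition PVI_rhs :: "complex \<Rightarrow> complex \<Rightarrow> complex \<Rightarrow> complex \<Rightarrow> complex
    \<Rightarrow> complex \<Rightarrow> complex \<Rightarrow> complex" where
  "PVI_rhs th1 th2 th3 th4 t y y1 =
     (let al = (th4 - 1)^2 / 2; be = -(th1^2) / 2; ga = th3^2 / 2; de = (1 - th2^2) / 2 in
      1/2 * (1/y + 1/(y - 1) + 1/(y - t)) * y1^2
      - (1/t + 1/(t - 1) + 1/(y - t)) * y1
      + y * (y - 1) * (y - t) / (t^2 * (t - 1)^2)
        * (al + be * t / y^2 + ga * (t - 1) / (y - 1)^2 + de * t * (t - 1) / (y - t)^2))"

text \<open>A curve (T s, Y s) parametrised by s solves P_VI at parameter value s: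
  derivatives with respect to t are computed by the chain rule,
  dy/dt = Y'(s)/T'(s), d^2y/dt^2 = (d/ds (dy/dt))/T'(s).\<close>
definition PVI_param_holds_at ::
  "complex \<Rightarrow> complex \<Rightarrow> complex \<Rightarrow> complex \<Rightarrow> (complex \<Rightarrow> complex) \<Rightarrow> (complex \<Rightarrow> complex)
    \<Rightarrow> complex \<Rightarrow> bool" where
  "PVI_param_holds_at th1 th2 th3 th4 T Y s \<longleftrightarrow>
     (let y1 = (\<lambda>u. deriv Y u / deriv T u);
          y2 = deriv y1 s / deriv T s
      in y2 = PVI_rhs th1 th2 th3 th4 (T s) (Y s) (y1 s))"

definition Ysol :: "complex \<Rightarrow> complex" where
  "Ysol s = 32 * s * (s + 1) * (5 * s^2 + 6 * s - 3) / ((s^2 + 2 * s + 5) * (3 * s^2 + 2 * s + 3)^2)"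

definition Tsol :: "complex \<Rightarrow> complex" where
  "Tsol s = 1024 * s^3 * (s + 1)^2 / ((s^2 + 6 * s + 1) * (3 * s^2 + 2 * s + 3)^3)"

end

theory Submission
  imports Defs
begin

text \<open>Along the curve, y' = (dy/ds)/(dt/ds) and y'' = (dy'/ds)/(dt/ds) are again rational
  functions of s, so the claim is an identity between rational functions.  Over the integers,
  y, y - 1, t, t - 1, y - t, dy/ds and dt/ds all factor into the linear factors s, s + 1, s - 1,
  s + 3, 3s + 1 and six quadratics; so do the coefficients of y'^2, y' and 1 in the right-hand
  side of P_VI.  After multiplying by a common denominator, the equation becomes a single
  polynomial identity of degree 22 in s.\<close>

lemma PVI_param_holds_atI:
  fixes T Y Y1 :: "complex \<Rightarrow> complex"
  assumes "open U" "s \<in> U"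
    and dydt: "\<And>u. u \<in> U \<Longrightarrow> deriv Y u / deriv T u = Y1 u"
    and "deriv Y1 s / deriv T s = PVI_rhs th1 th2 th3 th4 (T s) (Y s) (Y1 s)"
  shows "PVI_param_holds_at th1 th2 th3 th4 T Y s"
proof -
  have "eventually (\<lambda>u. deriv Y u / deriv T u = Y1 u) (nhds s)"
    unfolding eventually_nhds using assms(1,2) dydt by blast
  then have "deriv (\<lambda>u. deriv Y u / deriv T u) s = deriv Y1 s"
    by (rule deriv_cong_ev) (rule refl)
  then show ?thesis
    using assms(4) dydt[OF \<open>s \<in> U\<close>] unfolding PVI_param_holds_at_def Let_def by simp
qed

lemma PVI_rhs_at_parameters:
  "PVI_rhs (1/2) (1/4) (1/2) (3/4) t y y1 =
     1/2 * (1/y + 1/(y - 1) + 1/(y - t)) * y1^2 - (1/t + 1/(t - 1) + 1/(y - t)) * y1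
     + y * (y - 1) * (y - t) / (t^2 * (t - 1)^2)
       * (1/32 - 1/8 * t / y^2 + 1/8 * (t - 1) / (y - 1)^2 + 15/32 * t * (t - 1) / (y - t)^2)"
  unfolding PVI_rhs_def Let_def by (simp add: power2_eq_square)

text \<open>The factors are separate constants so that \<open>field_simps\<close> clears denominators without
  expanding them; they are unfolded only for the final \<open>algebra\<close> calls.\<close>

definition "sp1 u = u + (1::complex)"
definition "sm1 u = u - (1::complex)"
definition "sp3 u = u + (3::complex)"
definition "s3p1 u = 3 * u + (1::complex)"
definition "pA u = u^2 + 2 * u + (5::complex)"
definition "pB u = 3 * u^2 + 2 * u + (3::complex)"
definition "pC u = u^2 + 6 * u + (1::complex)"
definition "pD u = 5 * u^2 + 6 * u - (3::complex)"
definition "pE u = 3 * u^2 - 6 * u - (5::complex)"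
definition "pF u = 5 * u^2 + 2 * u + (1::complex)"

lemmas curve_factor_defs =
  sp1_def sm1_def sp3_def s3p1_def pA_def pB_def pC_def pD_def pE_def pF_def

definition "dY_num u = (15 - 45 * u - 212 * u^2 - 106 * u^3 + 23 * u^4 + 39 * u^5 + 30 * u^6
  :: complex)"

definition "dY1_num u = (675 + 4140 * u + 13335 * u^2 + 20349 * u^3 + 66834 * u^4
  + 274698 * u^5 + 537789 * u^6 + 487863 * u^7 + 224330 * u^8 + 92280 * u^9 + 108993 * u^10
  + 128763 * u^11 + 93402 * u^12 + 35442 * u^13 + 7179 * u^14 + 945 * u^15 + 135 * u^16
  :: complex)"

text \<open>Numerators of the coefficients of y'^2, y' and 1 in P_VI along the curve.\<close>

definition "c2_num u = (45 + 42 * u - 29 * u^2 - 212 * u^3 - 349 * u^4 - 54 * u^5 + 45 * u^6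
  :: complex)"

definition "c1_num u = (27 + 270 * u + 555 * u^2 - 2392 * u^3 - 9290 * u^4 - 14316 * u^5
  - 12754 * u^6 - 856 * u^7 + 4431 * u^8 + 1422 * u^9 + 135 * u^10 :: complex)"

definition "c0_num u = (2025 + 100890 * u + 271395 * u^2 - 720988 * u^3 - 1885167 * u^4
  + 2673734 * u^5 + 9846083 * u^6 + 8969336 * u^7 + 3465139 * u^8 + 380678 * u^9
  - 158079 * u^10 + 164 * u^11 + 70227 * u^12 + 40410 * u^13 + 12825 * u^14 :: complex)"

lemma curve_factor_derivatives [derivative_intros]:
  "(sp1 has_field_derivative 1) (at u)"
  "(sm1 has_field_derivative 1) (at u)"
  "(sp3 has_field_derivative 1) (at u)"
  "(s3p1 has_field_derivative 3) (at u)"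
  "(pA has_field_derivative 2 * u + 2) (at u)"
  "(pB has_field_derivative 6 * u + 2) (at u)"
  "(pC has_field_derivative 2 * u + 6) (at u)"
  "(pD has_field_derivative 10 * u + 6) (at u)"
  "(dY_num has_field_derivative
      - 45 - 424 * u - 318 * u^2 + 92 * u^3 + 195 * u^4 + 180 * u^5) (at u)"
  unfolding curve_factor_defs[abs_def] dY_num_def[abs_def]
  by (rule DERIV_cong, (rule derivative_intros)+, simp add: algebra_simps)+

lemma Ysol_factored: "Ysol = (\<lambda>u. 32 * u * sp1 u * pD u / (pA u * pB u^2))"
  by (simp add: fun_eq_iff Ysol_def curve_factor_defs)

lemma Tsol_factored: "Tsol = (\<lambda>u. 1024 * u^3 * sp1 u^2 / (pB u^3 * pC u))"
  by (simp add: fun_eq_iff Tsol_def curve_factor_defs mult.commute)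

lemma Ysol_minus_1:
  assumes "pA u \<noteq> 0" "pB u \<noteq> 0"
  shows "Ysol u - 1 = - sm1 u * sp3 u^2 * s3p1 u * pE u / (pA u * pB u^2)"
  unfolding Ysol_factored
  by (simp add: field_simps assms, unfold curve_factor_defs, algebra)

lemma Tsol_minus_1:
  assumes "pB u \<noteq> 0" "pC u \<noteq> 0"
  shows "Tsol u - 1 = - (sm1 u^2 * sp3 u^3 * s3p1 u^3) / (pB u^3 * pC u)"
  unfolding Tsol_factored
  by (simp add: field_simps assms, unfold curve_factor_defs, algebra)

lemma Ysol_minus_Tsol:
  assumes "pA u \<noteq> 0" "pB u \<noteq> 0" "pC u \<noteq> 0"
  shows "Ysol u - Tsol u
    = 32 * u * sp1 u * sm1 u * sp3 u^2 * s3p1 u * pF u / (pA u * pB u^3 * pC u)"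
  unfolding Ysol_factored Tsol_factored
  by (simp add: field_simps assms, unfold curve_factor_defs, algebra)

lemma has_field_derivative_Ysol:
  assumes "pA u \<noteq> 0" "pB u \<noteq> 0"
  shows "(Ysol has_field_derivative - 32 * sp3 u * dY_num u / (pA u^2 * pB u^3)) (at u)"
  unfolding Ysol_factored
  by (rule DERIV_cong, (rule derivative_intros | simp add: assms)+)
    (simp add: field_simps assms, unfold curve_factor_defs dY_num_def, algebra)

lemma has_field_derivative_Tsol:
  assumes "pB u \<noteq> 0" "pC u \<noteq> 0"
  shows "(Tsol has_field_derivative
      - 1024 * u^2 * sp1 u * sm1 u * sp3 u^2 * s3p1 u^2 / (pB u^4 * pC u^2)) (at u)"
  unfolding Tsol_factored
  by (rule DERIV_cong, (rule derivative_intros | simp add: assms)+)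
    (simp add: field_simps assms, unfold curve_factor_defs, algebra)

definition "curve_regular u \<longleftrightarrow> u * sp1 u * sm1 u * sp3 u * s3p1 u * pA u * pB u * pC u \<noteq> 0"

lemma curve_regular_nonzero:
  assumes "curve_regular u"
  shows "u \<noteq> 0" "sp1 u \<noteq> 0" "sm1 u \<noteq> 0" "sp3 u \<noteq> 0" "s3p1 u \<noteq> 0"
    "pA u \<noteq> 0" "pB u \<noteq> 0" "pC u \<noteq> 0"
  using assms by (simp_all add: curve_regular_def)

lemma open_curve_regular: "open {u. curve_regular u}"
  unfolding curve_regular_def curve_factor_defs
  by (rule open_Collect_neq; intro continuous_intros)

lemma curve_regular_if_deriv_Tsol_nonzero:
  assumes "pA u \<noteq> 0" "pB u \<noteq> 0" "pC u \<noteq> 0" "deriv Tsol u \<noteq> 0"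
  shows "curve_regular u"
  using assms DERIV_imp_deriv[OF has_field_derivative_Tsol[OF assms(2,3)]]
  by (auto simp: curve_regular_def)

definition "dYdT u = pB u * pC u^2 * dY_num u
  / (32 * u^2 * sp1 u * sm1 u * sp3 u * s3p1 u^2 * pA u^2)"

lemma deriv_Ysol_over_deriv_Tsol:
  assumes "curve_regular u"
  shows "deriv Ysol u / deriv Tsol u = dYdT u"
proof -
  note nz = curve_regular_nonzero[OF assms]
  have dY: "deriv Ysol u = - 32 * sp3 u * dY_num u / (pA u^2 * pB u^3)"
    by (rule DERIV_imp_deriv has_field_derivative_Ysol nz)+
  have dT: "deriv Tsol u
      = - 1024 * u^2 * sp1 u * sm1 u * sp3 u^2 * s3p1 u^2 / (pB u^4 * pC u^2)"
    by (rule DERIV_imp_deriv has_field_derivative_Tsol nz)+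
  show ?thesis
    unfolding dY dT dYdT_def by (simp add: field_simps nz eval_nat_numeral)
qed

lemma has_field_derivative_dYdT:
  assumes "curve_regular u"
  shows "(dYdT has_field_derivative pC u * dY1_num u
      / (16 * u^3 * sp1 u^2 * sm1 u^2 * sp3 u^2 * s3p1 u^3 * pA u^3)) (at u)"
proof -
  note nz = curve_regular_nonzero[OF assms]
  show ?thesis
    unfolding dYdT_def[abs_def]
    by (rule DERIV_cong, (rule derivative_intros | simp add: nz)+)
      (simp add: field_simps nz, unfold curve_factor_defs dY_num_def dY1_num_def, algebra)
qed

lemma PVI_coeff2_along_curve:
  assumes "curve_regular u" "pD u \<noteq> 0" "pE u \<noteq> 0" "pF u \<noteq> 0"
  shows "1/2 * (1/Ysol u + 1/(Ysol u - 1) + 1/(Ysol u - Tsol u))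
    = pA u * pB u^2 * pC u * c2_num u
      / (32 * u * sp1 u * sm1 u * sp3 u^2 * s3p1 u * pD u * pE u * pF u)"
proof -
  note nz = curve_regular_nonzero[OF assms(1)]
  show ?thesis
    unfolding Ysol_minus_1[OF nz(6,7)] Ysol_minus_Tsol[OF nz(6-8)]
    unfolding Ysol_factored
    by (simp add: field_simps nz assms(2-4), unfold curve_factor_defs c2_num_def, algebra)
qed

lemma PVI_coeff1_along_curve:
  assumes "curve_regular u" "pF u \<noteq> 0"
  shows "1/Tsol u + 1/(Tsol u - 1) + 1/(Ysol u - Tsol u)
    = pB u^3 * pC u * c1_num u
      / (1024 * u^3 * sp1 u^2 * sm1 u^2 * sp3 u^3 * s3p1 u^3 * pF u)"
proof -
  note nz = curve_regular_nonzero[OF assms(1)]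
  show ?thesis
    unfolding Tsol_minus_1[OF nz(7,8)] Ysol_minus_Tsol[OF nz(6-8)]
    unfolding Tsol_factored
    by (simp add: field_simps nz assms(2), unfold curve_factor_defs c1_num_def, algebra)
qed

lemma PVI_coeff0_prefactor_along_curve:
  assumes "curve_regular u"
  shows "Ysol u * (Ysol u - 1) * (Ysol u - Tsol u) / (Tsol u^2 * (Tsol u - 1)^2)
    = - (pB u^5 * pC u^3 * pD u * pE u * pF u)
      / (1024 * u^4 * sp1 u^2 * sm1 u^2 * sp3 u^2 * s3p1 u^4 * pA u^3)"
proof -
  note nz = curve_regular_nonzero[OF assms]
  show ?thesis
    unfolding Ysol_minus_1[OF nz(6,7)] Ysol_minus_Tsol[OF nz(6-8)] Tsol_minus_1[OF nz(7,8)]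
    unfolding Ysol_factored Tsol_factored
    by (simp add: field_simps nz, unfold curve_factor_defs, algebra)
qed

lemma PVI_coeff0_bracket_along_curve:
  assumes "curve_regular u" "pD u \<noteq> 0" "pE u \<noteq> 0" "pF u \<noteq> 0"
  shows "1/32 - 1/8 * Tsol u / Ysol u^2 + 1/8 * (Tsol u - 1) / (Ysol u - 1)^2
      + 15/32 * Tsol u * (Tsol u - 1) / (Ysol u - Tsol u)^2
    = - c0_num u / (32 * sp3 u * pD u^2 * pE u^2 * pF u^2)"
proof -
  note nz = curve_regular_nonzero[OF assms(1)]
  show ?thesis
    unfolding Ysol_minus_1[OF nz(6,7)] Ysol_minus_Tsol[OF nz(6-8)] Tsol_minus_1[OF nz(7,8)]
    unfolding Ysol_factored Tsol_factored
    by (simp add: field_simps nz assms(2-4), unfold curve_factor_defs c0_num_def, algebra)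
qed

lemma PVI_curve_polynomial_identity:
  "2 * pD u * pE u * pF u * dY1_num u + pC u^2 * c2_num u * dY_num u^2
     - pA u * pD u * pE u * c1_num u * dY_num u
     + u * sp1 u * sm1 u * sp3 u * s3p1 u * pB u * c0_num u = 0"
  unfolding curve_factor_defs dY1_num_def dY_num_def c2_num_def c1_num_def c0_num_def
  by algebra

lemma PVI_along_curve:
  assumes "curve_regular u" "pD u \<noteq> 0" "pE u \<noteq> 0" "pF u \<noteq> 0"
  shows "deriv dYdT u / deriv Tsol u
    = PVI_rhs (1/2) (1/4) (1/2) (3/4) (Tsol u) (Ysol u) (dYdT u)"
proof -
  note nz = curve_regular_nonzero[OF assms(1)]
  have dY1: "deriv dYdT u
      = pC u * dY1_num u / (16 * u^3 * sp1 u^2 * sm1 u^2 * sp3 u^2 * s3p1 u^3 * pA u^3)"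
    by (rule DERIV_imp_deriv has_field_derivative_dYdT assms(1))+
  have dT: "deriv Tsol u
      = - 1024 * u^2 * sp1 u * sm1 u * sp3 u^2 * s3p1 u^2 / (pB u^4 * pC u^2)"
    by (rule DERIV_imp_deriv has_field_derivative_Tsol nz)+
  show ?thesis
    unfolding dY1 dT PVI_rhs_at_parameters PVI_coeff2_along_curve[OF assms]
      PVI_coeff1_along_curve[OF assms(1,4)] PVI_coeff0_prefactor_along_curve[OF assms(1)]
      PVI_coeff0_bracket_along_curve[OF assms] dYdT_def
    using PVI_curve_polynomial_identity[of u]
    by (simp add: field_simps nz assms(2-4)) algebra
qed

theorem mainTheorem9:
  fixes s :: complex
  assumes "(s^2 + 2 * s + 5) * (3 * s^2 + 2 * s + 3) \<noteq> 0"
    and "s^2 + 6 * s + 1 \<noteq> 0"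
    and "deriv Tsol s \<noteq> 0"
    and "Tsol s \<noteq> 0" and "Tsol s \<noteq> 1"
    and "Ysol s \<noteq> 0" and "Ysol s \<noteq> 1" and "Ysol s \<noteq> Tsol s"
  shows "PVI_param_holds_at (1/2) (1/4) (1/2) (3/4) Tsol Ysol s"
proof -
  have AB: "pA s \<noteq> 0" "pB s \<noteq> 0" and C: "pC s \<noteq> 0"
    using assms(1,2) by (auto simp: pA_def pB_def pC_def)
  have regular: "curve_regular s"
    using AB C assms(3) by (rule curve_regular_if_deriv_Tsol_nonzero)
  have "pD s \<noteq> 0"
    using assms(6) by (auto simp: Ysol_factored)
  moreover have "pE s \<noteq> 0"
    using assms(7) Ysol_minus_1[OF AB] by auto
  moreover have "pF s \<noteq> 0"
    using assms(8) Ysol_minus_Tsol[OF AB C] by auto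
  ultimately have "deriv dYdT s / deriv Tsol s
      = PVI_rhs (1/2) (1/4) (1/2) (3/4) (Tsol s) (Ysol s) (dYdT s)"
    by (rule PVI_along_curve[OF regular])
  then show ?thesis
    using open_curve_regular regular deriv_Ysol_over_deriv_Tsol
    by (intro PVI_param_holds_atI[where U = "{u. curve_regular u}"]) auto
qed

end
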